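(* If $L$ is a finite ranked lattice with at least two elements, then $\mathcal{M}(L,1)=0$.
   Context: For a finite ranked poset $\mathcal{P}$ with rank function $\mathrm{rk}$, let $\mathrm{rk}(\mathcal{P})$ be the maximum rank of an element and $\rho(x,y,z)=3\,\mathrm{rk}(\mathcal{P})-\mathrm{rk}(x)-\mathrm{rk}(y)-\mathrm{rk}(z)$. Let $\delta_3(x,y,z)=1$ if $x=y=z$ and $0$ otherwise, and let $J$ be the unique integer-valued function on triples $x\le y\le z$ of $\mathcal{P}$ with $\sum_{x\le a\le y\le b\le z}J(a,y,b)=\delta_3(x,y,z)$ for all $x\le y\le z$. Then $\mathcal{M}(\mathcal{P},t)=\sum_{x\le y\le z}J(x,y,z)\,t^{\rho(x,y,z)}$. *)

theory Defs
  imports "HOL-Computational_Algebra.Polynomial"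
begin

definition covers :: "'a::order \<Rightarrow> 'a \<Rightarrow> bool" where
  "covers x y \<longleftrightarrow> x < y \<and> \<not> (\<exists>z. x < z \<and> z < y)"

definition ranked :: "('a::order \<Rightarrow> nat) \<Rightarrow> bool" where
  "ranked rk \<longleftrightarrow> (\<forall>x. (\<forall>y. \<not> y < x) \<longrightarrow> rk x = 0) \<and>
                  (\<forall>x y. covers x y \<longrightarrow> rk y = rk x + 1)"

definition rank_of :: "('a::finite \<Rightarrow> nat) \<Rightarrow> nat" where
  "rank_of rk = Max (rk ` UNIV)"

definition rho :: "('a::finite \<Rightarrow> nat) \<Rightarrow> 'a \<Rightarrow> 'a \<Rightarrow> 'a \<Rightarrow> nat" where
  "rho rk x y z = 3 * rank_of rk - rk x - rk y - rk z"

definition triples :: "('a::order \<times> 'a \<times> 'a) set" where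
  "triples = {(x, y, z). x \<le> y \<and> y \<le> z}"

definition delta3 :: "'a \<Rightarrow> 'a \<Rightarrow> 'a \<Rightarrow> int" where
  "delta3 x y z = (if x = y \<and> y = z then 1 else 0)"

text \<open>Defining relation of J on triples x \<le> y \<le> z; J is normalised to 0 off triples
  so that it is uniquely determined as a function.\<close>
definition is_J :: "('a::order \<Rightarrow> 'a \<Rightarrow> 'a \<Rightarrow> int) \<Rightarrow> bool" where
  "is_J J \<longleftrightarrow>
     (\<forall>x y z. x \<le> y \<and> y \<le> z \<longrightarrow>
        (\<Sum>(a, b) \<in> {(a, b). x \<le> a \<and> a \<le> y \<and> y \<le> b \<and> b \<le> z}. J a y b) = delta3 x y z) \<and>
     (\<forall>x y z. \<not> (x \<le> y \<and> y \<le> z) \<longrightarrow> J x y z = 0)"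

definition Jfun :: "'a::order \<Rightarrow> 'a \<Rightarrow> 'a \<Rightarrow> int" where
  "Jfun = (THE J. is_J J)"

definition Mpoly :: "('a::{finite,order} \<Rightarrow> nat) \<Rightarrow> int poly" where
  "Mpoly rk = (\<Sum>(x, y, z) \<in> triples. monom (Jfun x y z) (rho rk x y z))"

end

theory Submission
  imports Defs
begin

text \<open>At \<open>t = 1\<close> the weights \<open>t\<^sup>\<rho>\<close> disappear, and
  \<open>\<M>(L,1)\<close> is the sum of \<open>J\<close> over all chains \<open>x \<le> y \<le> z\<close>. Grouping them by the middle
  element \<open>y\<close>, and using that every \<open>x\<close> lies above the bottom \<open>0\<close> and every \<open>z\<close> below
  the top \<open>1\<close>, the inner sum is the defining relation of \<open>J\<close> at \<open>(0, y, 1)\<close>, hence equals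
  \<open>\<delta>\<^sub>3(0, y, 1)\<close>, which vanishes because \<open>0 \<noteq> 1\<close>.

  For this, \<open>J\<close> must exist: \<open>J(x,y,z) = \<mu>(x,y) \<mu>(y,z)\<close> works, the two factors being the
  Moebius function characterised by summing over its first, respectively second, argument.\<close>

function mobius :: "'a::{finite,order} \<Rightarrow> 'a \<Rightarrow> int" where
  "mobius x y = of_bool (x = y) - (\<Sum>a \<in> {x..<y}. mobius x a)"
  by auto
termination
  by (relation "measure (\<lambda>(x, y). card {..<y})") (auto intro!: psubset_card_mono)

function dual_mobius :: "'a::{finite,order} \<Rightarrow> 'a \<Rightarrow> int" where
  "dual_mobius x y = of_bool (x = y) - (\<Sum>a \<in> {x<..y}. dual_mobius a y)"
  by auto
termination
  by (relation "measure (\<lambda>(x, y). card {x<..})") (auto intro!: psubset_card_mono)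

declare mobius.simps [simp del] dual_mobius.simps [simp del]

lemma sum_mobius:
  fixes x y :: "'a::{finite,order}"
  assumes "x \<le> y"
  shows "(\<Sum>a \<in> {x..y}. mobius x a) = of_bool (x = y)"
proof -
  have "{x..y} = insert y {x..<y}"
    using assms by auto
  then show ?thesis
    by (simp add: mobius.simps [of x y])
qed

lemma sum_dual_mobius:
  fixes x y :: "'a::{finite,order}"
  assumes "x \<le> y"
  shows "(\<Sum>a \<in> {x..y}. dual_mobius a y) = of_bool (x = y)"
proof -
  have "{x..y} = insert x {x<..y}"
    using assms by auto
  then show ?thesis
    by (simp add: dual_mobius.simps [of x y])
qed

lemma is_J_mobius_product:
  "is_J (\<lambda>x y z :: 'a::{finite,order}. if x \<le> y \<and> y \<le> z then dual_mobius x y * mobius y z else 0)"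
  unfolding is_J_def
proof (intro conjI allI impI)
  fix x y z :: 'a
  assume xyz: "x \<le> y \<and> y \<le> z"
  have "{(a, b). x \<le> a \<and> a \<le> y \<and> y \<le> b \<and> b \<le> z} = {x..y} \<times> {y..z}"
    by auto
  then have "(\<Sum>(a, b) \<in> {(a, b). x \<le> a \<and> a \<le> y \<and> y \<le> b \<and> b \<le> z}.
               if a \<le> y \<and> y \<le> b then dual_mobius a y * mobius y b else 0)
           = (\<Sum>(a, b) \<in> {x..y} \<times> {y..z}. dual_mobius a y * mobius y b)" (is "?lhs = _")
    by (auto intro!: sum.cong)
  also have "\<dots> = (\<Sum>a \<in> {x..y}. dual_mobius a y) * (\<Sum>b \<in> {y..z}. mobius y b)"
    by (simp add: sum_product sum.cartesian_product)
  also have "\<dots> = delta3 x y z"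
    using xyz by (simp add: sum_mobius sum_dual_mobius delta3_def)
  finally show "?lhs = delta3 x y z" .
qed auto

lemma is_J_sum:
  assumes "is_J J" and "x \<le> y" and "y \<le> z"
  shows "(\<Sum>(a, b) \<in> {(a, b). x \<le> a \<and> a \<le> y \<and> y \<le> b \<and> b \<le> z}. J a y b) = delta3 x y z"
  using assms by (simp add: is_J_def)

lemma is_J_zero:
  assumes "is_J J" and "\<not> (x \<le> y \<and> y \<le> z)"
  shows "J x y z = 0"
  using assms by (simp add: is_J_def)

lemma is_J_unique:
  fixes J J' :: "'a::{finite,order} \<Rightarrow> 'a \<Rightarrow> 'a \<Rightarrow> int"
  assumes J: "is_J J" and J': "is_J J'"
  shows "J x y z = J' x y z"
proof (induction "card {x..z}" arbitrary: x y z rule: less_induct)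
  case less
  show ?case
  proof (cases "x \<le> y \<and> y \<le> z")
    case False
    with J J' show ?thesis
      by (simp add: is_J_zero)
  next
    case xyz: True
    define S where "S = {(a, b). x \<le> a \<and> a \<le> y \<and> y \<le> b \<and> b \<le> z}"
    have xz: "(x, z) \<in> S"
      using xyz by (simp add: S_def)
    have inner: "J a y b = J' a y b" if "(a, b) \<in> S - {(x, z)}" for a b
    proof -
      from that have "x \<le> a" "a \<le> y" "y \<le> b" "b \<le> z" "(a, b) \<noteq> (x, z)"
        by (auto simp: S_def)
      then have "{a..b} \<subseteq> {x..z}" and "x \<notin> {a..b} \<or> z \<notin> {a..b}" and "x \<in> {x..z}" "z \<in> {x..z}"
        by (auto intro: order_trans dest: order_antisym)
      then have "{a..b} \<subset> {x..z}"
        by blast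
      then have "card {a..b} < card {x..z}"
        by (simp add: psubset_card_mono)
      then show ?thesis
        by (rule less)
    qed
    have "(\<Sum>(a, b) \<in> S. J a y b) = delta3 x y z" "(\<Sum>(a, b) \<in> S. J' a y b) = delta3 x y z"
      using is_J_sum [OF J] is_J_sum [OF J'] xyz unfolding S_def by simp_all
    then have "J x y z + (\<Sum>(a, b) \<in> S - {(x, z)}. J a y b) = delta3 x y z"
      and "J' x y z + (\<Sum>(a, b) \<in> S - {(x, z)}. J' a y b) = delta3 x y z"
      by (simp_all add: sum.remove [OF _ xz])
    moreover have "(\<Sum>(a, b) \<in> S - {(x, z)}. J a y b) = (\<Sum>(a, b) \<in> S - {(x, z)}. J' a y b)"
      using inner by (intro sum.cong) auto
    ultimately show ?thesis
      by linarith
  qed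
qed

lemma is_J_Jfun: "is_J (Jfun :: 'a::{finite,order} \<Rightarrow> _)"
  unfolding Jfun_def
  by (rule theI [of is_J, OF is_J_mobius_product])
    (intro ext, erule is_J_unique [OF _ is_J_mobius_product])

lemma sum_triples_by_middle:
  fixes f :: "'a::{finite,order} \<Rightarrow> 'a \<Rightarrow> 'a \<Rightarrow> 'b::comm_monoid_add"
  shows "(\<Sum>(x, y, z) \<in> triples. f x y z) = (\<Sum>y\<in>UNIV. \<Sum>(x, z) \<in> {..y} \<times> {y..}. f x y z)"
proof -
  have triples_eq: "triples = (\<lambda>(y, x, z). (x, y, z)) ` (SIGMA y:UNIV. {..y::'a} \<times> {y..})"
    unfolding triples_def by (auto simp: image_iff)
  show ?thesis
    unfolding triples_eq by (subst sum.reindex) (auto simp: inj_on_def sum.Sigma case_prod_unfold)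
qed

lemma sum_triples_is_J:
  fixes J :: "'a::{finite,order} \<Rightarrow> 'a \<Rightarrow> 'a \<Rightarrow> int" and lo hi :: 'a
  assumes J: "is_J J" and least: "\<And>x. lo \<le> x" and greatest: "\<And>x. x \<le> hi"
  shows "(\<Sum>(x, y, z) \<in> triples. J x y z) = of_bool (lo = hi)"
proof -
  have "(\<Sum>(x, y, z) \<in> triples. J x y z) = (\<Sum>y\<in>UNIV. \<Sum>(x, z) \<in> {..y} \<times> {y..}. J x y z)"
    by (rule sum_triples_by_middle)
  also have "\<dots> = (\<Sum>y\<in>UNIV. delta3 lo y hi)"
  proof (rule sum.cong)
    fix y
    have "(\<Sum>(x, z) \<in> {(a, b). lo \<le> a \<and> a \<le> y \<and> y \<le> b \<and> b \<le> hi}. J x y z) = delta3 lo y hi"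
      using is_J_sum [OF J least greatest] .
    moreover have "{(a, b). lo \<le> a \<and> a \<le> y \<and> y \<le> b \<and> b \<le> hi} = {..y} \<times> {y..}"
      using least greatest by auto
    ultimately show "(\<Sum>(x, z) \<in> {..y} \<times> {y..}. J x y z) = delta3 lo y hi"
      by simp
  qed simp
  also have "\<dots> = (\<Sum>y\<in>UNIV. if y = lo then of_bool (lo = hi) else 0)"
    by (intro sum.cong) (auto simp: delta3_def)
  also have "\<dots> = of_bool (lo = hi)"
    by simp
  finally show ?thesis .
qed

lemma poly_Mpoly_one:
  fixes rk :: "'a::{finite,order} \<Rightarrow> nat"
  shows "poly (Mpoly rk) 1 = (\<Sum>(x, y, z) \<in> (triples :: ('a \<times> 'a \<times> 'a) set). Jfun x y z)"
  by (simp add: Mpoly_def poly_sum poly_monom case_prod_unfold)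

theorem proposition6p4:
  fixes rk :: "'a::{finite, lattice} \<Rightarrow> nat"
  assumes "ranked rk"
    and "card (UNIV :: 'a set) \<ge> 2"
  shows "poly (Mpoly rk) 1 = 0"
proof -
  define lo where "lo = Inf_fin (UNIV :: 'a set)"
  define hi where "hi = Sup_fin (UNIV :: 'a set)"
  have least: "lo \<le> x" and greatest: "x \<le> hi" for x
    unfolding lo_def hi_def by (simp_all add: Inf_fin.coboundedI Sup_fin.coboundedI)
  have "lo \<noteq> hi"
  proof
    assume "lo = hi"
    then have "x = y" for x y :: 'a
      using least greatest by (metis order_antisym)
    then have "card (UNIV :: 'a set) \<le> 1"
      by (simp add: card_le_Suc0_iff_eq)
    with assms(2) show False
      by simp
  qed
  then show ?thesis
    using poly_Mpoly_one [of rk] sum_triples_is_J [OF is_J_Jfun least greatest] by simp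
qed

end
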